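(* Let $G=(V,E)$ be a finite undirected graph, and for $i\in V$ let $N(i)$ denote its set of neighbours. Fix $d\ge 1$. For each node $i\in V$ let $\mathbf{S}_i,\mathbf{T}_i\in\mathbb{R}^{d\times d}$ (the source and target maps of $i$), each of the form $c\,Q$ with $c\ge 0$ a scalar and $Q$ an orthogonal matrix. For a $0$-cochain $\mathbf{X}=(\mathbf{x}_i)_{i\in V}$, $\mathbf{x}_i\in\mathbb{R}^d$, define $$L^{\mathrm{out}}(\mathbf{X})_i=\sum_{j\in N(i)}\big(\mathbf{S}_i^{\top}\mathbf{S}_i\mathbf{x}_i-\mathbf{T}_i^{\top}\mathbf{S}_j\mathbf{x}_j\big),\qquad ((L^{\mathrm{in}})^{\top}\mathbf{X})_i=\sum_{j\in N(i)}\big(\mathbf{T}_i^{\top}\mathbf{T}_i\mathbf{x}_i-\mathbf{T}_i^{\top}\mathbf{S}_j\mathbf{x}_j\big).$$ Let $i\in V$. (1) If $\mathbf{T}_i=0$, then $\big((L^{\mathrm{in}})^{\top}L^{\mathrm{out}}(\mathbf{X})\big)_i=0$ for every $\mathbf{X}$. (2) If $k\in N(i)$ satisfies $\mathbf{S}_k=0$, then $\big((L^{\mathrm{in}})^{\top}L^{\mathrm{out}}(\mathbf{X})\big)_i$ does not depend on $\mathbf{x}_k$.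
   Context: $L^{\mathrm{out}}$ and $(L^{\mathrm{in}})^{\top}$ are the out-degree sheaf Laplacian and the transpose of the in-degree sheaf Laplacian of a cellular sheaf on the directed graph obtained by replacing each undirected edge $\{i,j\}$ by both directed edges $ij$ and $ji$, where every node $i$ uses the same restriction map $\mathbf{S}_i$ on edges leaving $i$ and $\mathbf{T}_i$ on edges entering $i$. The composition $(L^{\mathrm{in}})^{\top}L^{\mathrm{out}}$ means applying $L^{\mathrm{out}}$ first. *)

theory Defs
  imports "HOL-Analysis.Analysis"
begin

definition undirected_graph :: "'v set \<Rightarrow> ('v \<Rightarrow> 'v \<Rightarrow> bool) \<Rightarrow> bool" where
  "undirected_graph V E \<longleftrightarrow> finite V \<and> (\<forall>i j. E i j \<longrightarrow> i \<in> V \<and> j \<in> V)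
     \<and> (\<forall>i j. E i j \<longrightarrow> E j i) \<and> (\<forall>i. \<not> E i i)"

definition nbhd :: "'v set \<Rightarrow> ('v \<Rightarrow> 'v \<Rightarrow> bool) \<Rightarrow> 'v \<Rightarrow> 'v set" where
  "nbhd V E i = {j \<in> V. E i j}"

definition scaled_orthogonal :: "real^'d^'d \<Rightarrow> bool" where
  "scaled_orthogonal M \<longleftrightarrow> (\<exists>c Q. c \<ge> 0 \<and> orthogonal_matrix Q \<and> M = c *\<^sub>R Q)"

definition L_out :: "'v set \<Rightarrow> ('v \<Rightarrow> 'v \<Rightarrow> bool) \<Rightarrow> ('v \<Rightarrow> real^'d^'d) \<Rightarrow> ('v \<Rightarrow> real^'d^'d)
    \<Rightarrow> ('v \<Rightarrow> real^'d) \<Rightarrow> ('v \<Rightarrow> real^'d)" where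
  "L_out V E S T X = (\<lambda>i. \<Sum>j\<in>nbhd V E i.
      (transpose (S i) ** S i) *v X i - (transpose (T i) ** S j) *v X j)"

definition L_in_T :: "'v set \<Rightarrow> ('v \<Rightarrow> 'v \<Rightarrow> bool) \<Rightarrow> ('v \<Rightarrow> real^'d^'d) \<Rightarrow> ('v \<Rightarrow> real^'d^'d)
    \<Rightarrow> ('v \<Rightarrow> real^'d) \<Rightarrow> ('v \<Rightarrow> real^'d)" where
  "L_in_T V E S T X = (\<lambda>i. \<Sum>j\<in>nbhd V E i.
      (transpose (T i) ** T i) *v X i - (transpose (T i) ** S j) *v X j)"

end

theory Submission
  imports Defs
begin

text \<open>Every summand of \<open>(L\<^sup>i\<^sup>n)\<^sup>T\<close> at \<open>i\<close> is premultiplied by \<open>T\<^sub>i\<^sup>T\<close>, which gives (1).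
  \<open>L\<^sup>o\<^sup>u\<^sup>t X\<close> depends on \<open>X\<close> only through the vectors \<open>S\<^sub>j x\<^sub>j\<close>, and \<open>S\<^sub>k = 0\<close> erases \<open>x\<^sub>k\<close>
  from all of them, which gives (2).\<close>

lemma L_in_T_zero_target:
  assumes "T i = 0"
  shows "L_in_T V E S T X i = 0"
  using assms by (simp add: L_in_T_def flip: matrix_vector_mul_assoc)

lemma L_out_cong_source_images:
  assumes "\<And>j. S j *v X j = S j *v Y j"
  shows "L_out V E S T X = L_out V E S T Y"
  using assms by (simp add: L_out_def flip: matrix_vector_mul_assoc)

theorem proposition1:
  fixes V :: "'v set" and E :: "'v \<Rightarrow> 'v \<Rightarrow> bool"
    and S T :: "'v \<Rightarrow> real^'d^'d" and i :: 'v
  assumes "undirected_graph V E"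
    and "\<forall>v\<in>V. scaled_orthogonal (S v) \<and> scaled_orthogonal (T v)"
    and "i \<in> V"
  shows "(T i = 0 \<longrightarrow> (\<forall>X. L_in_T V E S T (L_out V E S T X) i = 0))
    \<and> (\<forall>k\<in>nbhd V E i. S k = 0 \<longrightarrow>
         (\<forall>X Y. (\<forall>j. j \<noteq> k \<longrightarrow> X j = Y j) \<longrightarrow>
            L_in_T V E S T (L_out V E S T X) i = L_in_T V E S T (L_out V E S T Y) i))"
proof (intro conjI impI allI ballI)
  fix X :: "'v \<Rightarrow> real^'d"
  assume "T i = 0"
  then show "L_in_T V E S T (L_out V E S T X) i = 0"
    by (rule L_in_T_zero_target)
next
  fix k and X Y :: "'v \<Rightarrow> real^'d"
  assume "S k = 0" and "\<forall>j. j \<noteq> k \<longrightarrow> X j = Y j"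
  then have "S j *v X j = S j *v Y j" for j
    by (cases "j = k") simp_all
  then have "L_out V E S T X = L_out V E S T Y"
    by (rule L_out_cong_source_images)
  then show "L_in_T V E S T (L_out V E S T X) i = L_in_T V E S T (L_out V E S T Y) i"
    by (rule arg_cong)
qed

end
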